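(* Let $\Gamma$ be any art gallery (not necessarily normal). If a configuration consisting of one or two guards visually covers the walls of $\Gamma$, then this configuration visually covers all of $\Gamma$.
   Context: An art gallery $\Gamma$ is a simple polygon in the plane (closed region: boundary together with interior), whose boundary (the walls) consists of finitely many line segments. A guard is a point of $\Gamma$; a guard $G$ visually covers $A\in\Gamma$ if the segment $GA$ lies entirely in $\Gamma$. A configuration of guards is a finite set $F$ of points of $\Gamma$; it visually covers $X\subseteq\Gamma$ if each point of $X$ is visually covered by some guard in $F$. *)

theory Defs
  imports "HOL-Analysis.Analysis"
begin

fun polygonal_path :: "complex list \<Rightarrow> real \<Rightarrow> complex" where
  "polygonal_path [] = linepath 0 0"
| "polygonal_path [a] = linepath a a"
| "polygonal_path [a, b] = linepath a b"
| "polygonal_path (a # b # c # xs) = linepath a b +++ polygonal_path (b # c # xs)"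

definition simple_polygon_vertices :: "complex list \<Rightarrow> bool" where
  "simple_polygon_vertices vs \<longleftrightarrow>
     vs \<noteq> [] \<and> hd vs = last vs \<and> simple_path (polygonal_path vs)"

definition walls :: "complex list \<Rightarrow> complex set" where
  "walls vs = path_image (polygonal_path vs)"

definition gallery :: "complex list \<Rightarrow> complex set" where
  "gallery vs = walls vs \<union> inside (walls vs)"

definition visually_covers :: "complex set \<Rightarrow> complex \<Rightarrow> complex \<Rightarrow> bool" where
  "visually_covers \<Gamma> G A \<longleftrightarrow> G \<in> \<Gamma> \<and> A \<in> \<Gamma> \<and> closed_segment G A \<subseteq> \<Gamma>"

definition config_covers :: "complex set \<Rightarrow> complex set \<Rightarrow> complex set \<Rightarrow> bool" where
  "config_covers \<Gamma> F X \<longleftrightarrow> (\<forall>A\<in>X. \<exists>G\<in>F. visually_covers \<Gamma> G A)"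

end

theory Submission
  imports Defs
begin

text \<open>The gallery is the closed region R = S \<union> inside S bounded by the compact wall
  set S. Let A be an interior point and G1 a guard not seeing A. Since inside S is
  open and bounded, the line through A and G1 leaves it on both sides: it meets
  the walls at A1 between A and G1 and at Q on the far side of A, and the chord
  A1 Q lies in R. Guards G, G' see Q and A1. If G = G1, then G1 sees A along the
  segment G1 Q; if G' = G1, then G1 sees A through A1. Otherwise G = G' (there are
  at most two guards), and A lies on a side of the triangle G A1 Q, whose three
  sides lie in R; as the unbounded connected outside of S cannot meet R, the
  whole triangle lies in R, so G sees A.\<close>

lemma ray_point_in_segment:
  fixes A d :: "'a::real_vector"
  assumes "0 \<le> s" "s \<le> t"
  shows "A + s *\<^sub>R d \<in> closed_segment A (A + t *\<^sub>R d)"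
proof (cases "t = 0")
  case True
  then show ?thesis using assms by simp
next
  case False
  then have "A + s *\<^sub>R d = (1 - s / t) *\<^sub>R A + (s / t) *\<^sub>R (A + t *\<^sub>R d)"
    by (simp add: algebra_simps)
  moreover have "0 \<le> s / t" "s / t \<le> 1" using assms False by auto
  ultimately show ?thesis unfolding closed_segment_def by blast
qed

lemma point_between_opposite_rays:
  fixes A d :: "'a::real_vector"
  assumes "0 \<le> \<alpha>" "0 \<le> \<beta>" "0 < \<alpha> + \<beta>"
  shows "A \<in> closed_segment (A + \<alpha> *\<^sub>R d) (A - \<beta> *\<^sub>R d)"
proof -
  define u where "u = \<alpha> / (\<alpha> + \<beta>)"
  have u: "0 \<le> u" "u \<le> 1" using assms by (auto simp: u_def)
  have "(1 - u) * \<alpha> - u * \<beta> = 0" using assms by (simp add: u_def field_simps)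
  moreover have "(1 - u) *\<^sub>R (A + \<alpha> *\<^sub>R d) + u *\<^sub>R (A - \<beta> *\<^sub>R d)
      = A + ((1 - u) * \<alpha> - u * \<beta>) *\<^sub>R d"
    by (simp add: algebra_simps)
  ultimately have "A = (1 - u) *\<^sub>R (A + \<alpha> *\<^sub>R d) + u *\<^sub>R (A - \<beta> *\<^sub>R d)"
    by simp
  then show ?thesis using u unfolding closed_segment_def by blast
qed

lemma ray_meets_boundary:
  fixes S :: "'a::euclidean_space set"
  assumes "closed S" "bounded S" "A \<in> inside S" "d \<noteq> 0"
  obtains t where "0 < t" "A + t *\<^sub>R d \<in> S"
    "closed_segment A (A + t *\<^sub>R d) \<subseteq> S \<union> inside S"
proof -
  have int: "interior (inside S) = inside S"
    using open_inside[OF assms(1)] by (rule interior_open)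
  obtain t where t: "0 < t" "A + t *\<^sub>R d \<in> frontier (inside S)"
    and before: "\<And>e. \<lbrakk>0 \<le> e; e < t\<rbrakk> \<Longrightarrow> A + e *\<^sub>R d \<in> inside S"
    using ray_to_frontier[OF bounded_inside[OF assms(2)]] assms(3,4) int by metis
  have end_in: "A + t *\<^sub>R d \<in> S"
    using t(2) frontier_inside_subset[OF assms(1)] by blast
  have "closed_segment A (A + t *\<^sub>R d) \<subseteq> S \<union> inside S"
  proof
    fix x assume "x \<in> closed_segment A (A + t *\<^sub>R d)"
    then obtain u where u: "0 \<le> u" "u \<le> 1" "x = A + (u * t) *\<^sub>R d"
      by (auto simp: in_segment algebra_simps)
    show "x \<in> S \<union> inside S"
    proof (cases "u = 1")
      case True then show ?thesis using u end_in by simp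
    next
      case False
      then have "u * t < t" using u t(1) by simp
      then show ?thesis using before[of "u * t"] u t(1) by simp
    qed
  qed
  then show thesis using that t(1) end_in by blast
qed

lemma chord_through_interior_point:
  fixes S :: "'a::euclidean_space set"
  assumes "closed S" "bounded S" "A \<in> inside S" "d \<noteq> 0"
  obtains \<alpha> \<beta> where "0 < \<alpha>" "0 < \<beta>" "A + \<alpha> *\<^sub>R d \<in> S" "A - \<beta> *\<^sub>R d \<in> S"
    "closed_segment (A + \<alpha> *\<^sub>R d) (A - \<beta> *\<^sub>R d) \<subseteq> S \<union> inside S"
proof -
  obtain \<alpha> where \<alpha>: "0 < \<alpha>" "A + \<alpha> *\<^sub>R d \<in> S"
    "closed_segment A (A + \<alpha> *\<^sub>R d) \<subseteq> S \<union> inside S"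
    using ray_meets_boundary[OF assms] .
  obtain \<beta> where \<beta>: "0 < \<beta>" "A + \<beta> *\<^sub>R (- d) \<in> S"
    "closed_segment A (A + \<beta> *\<^sub>R (- d)) \<subseteq> S \<union> inside S"
    using ray_meets_boundary[OF assms(1-3)] assms(4) by (metis neg_equal_0_iff_equal)
  have "closed_segment (A + \<alpha> *\<^sub>R d) (A - \<beta> *\<^sub>R d)
      = closed_segment (A + \<alpha> *\<^sub>R d) A \<union> closed_segment A (A - \<beta> *\<^sub>R d)"
    using point_between_opposite_rays[of \<alpha> \<beta> A d] \<alpha>(1) \<beta>(1)
    by (simp add: Un_closed_segment)
  then show thesis
    using that \<alpha> \<beta> by (simp add: closed_segment_commute)
qed

text \<open>In the plane, a triangle whose sides lie in S \<union> inside S lies there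
  entirely: otherwise the connected unbounded outside of S would enter the
  triangle and hence cross its frontier, which consists of the three sides.\<close>

lemma triangle_in_filled_region:
  fixes S :: "'a::euclidean_space set"
  assumes "DIM('a) = 2" "bounded S"
    and "closed_segment a b \<union> closed_segment b c \<union> closed_segment c a \<subseteq> S \<union> inside S"
  shows "convex hull {a, b, c} \<subseteq> S \<union> inside S"
proof
  fix x assume x: "x \<in> convex hull {a, b, c}"
  show "x \<in> S \<union> inside S"
  proof (rule ccontr)
    assume "x \<notin> S \<union> inside S"
    then have x_out: "x \<in> outside S" using inside_Un_outside by blast
    have "bounded (convex hull {a, b, c})" by (simp add: bounded_convex_hull)
    then have "outside S - convex hull {a, b, c} \<noteq> {}"
      using unbounded_outside[OF assms(2)] bounded_subset by blast
    moreover have "outside S \<inter> convex hull {a, b, c} \<noteq> {}" using x x_out by blast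
    moreover have "connected (outside S)"
      using connected_outside[OF assms(2)] assms(1) by simp
    ultimately have "outside S \<inter> frontier (convex hull {a, b, c}) \<noteq> {}"
      using connected_Int_frontier by blast
    then have "outside S \<inter> (S \<union> inside S) \<noteq> {}"
      using frontier_of_triangle[OF assms(1)] assms(3) by auto
    then show False
      using outside_no_overlap inside_Int_outside by blast
  qed
qed

lemma segment_in_filled_triangle:
  fixes S :: "'a::euclidean_space set"
  assumes "DIM('a) = 2" "bounded S"
    and "closed_segment G P \<subseteq> S \<union> inside S" "closed_segment G Q \<subseteq> S \<union> inside S"
    and "closed_segment P Q \<subseteq> S \<union> inside S" "A \<in> closed_segment P Q"
  shows "closed_segment G A \<subseteq> S \<union> inside S"
proof -
  have hull: "convex hull {P, Q, G} \<subseteq> S \<union> inside S"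
    using triangle_in_filled_region[OF assms(1,2)] assms(3-5)
    by (simp add: closed_segment_commute)
  have "A \<in> convex hull {P, Q, G}"
    using assms(6) hull_mono[of "{P, Q}" "{P, Q, G}"] by (auto simp: segment_convex_hull)
  moreover have "G \<in> convex hull {P, Q, G}" by (simp add: hull_inc)
  ultimately have "closed_segment G A \<subseteq> convex hull {P, Q, G}"
    by (intro closed_segment_subset) auto
  then show ?thesis using hull by blast
qed

lemma chord_towards_guard:
  fixes S :: "'a::euclidean_space set"
  assumes "closed S" "bounded S" "A \<in> inside S"
    and unseen: "\<not> closed_segment G1 A \<subseteq> S \<union> inside S"
  obtains A1 Q where "A1 \<in> S" "Q \<in> S" "A1 \<in> closed_segment A G1"
    "A \<in> closed_segment G1 Q" "A \<in> closed_segment A1 Q"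
    "closed_segment A1 Q \<subseteq> S \<union> inside S"
proof -
  define d where "d = G1 - A"
  have G1_eq: "G1 = A + 1 *\<^sub>R d" by (simp add: d_def)
  have "d \<noteq> 0" using unseen assms(3) by (auto simp: d_def)
  then obtain \<alpha> \<beta> where ab: "0 < \<alpha>" "0 < \<beta>"
    and ends: "A + \<alpha> *\<^sub>R d \<in> S" "A - \<beta> *\<^sub>R d \<in> S"
    and chord: "closed_segment (A + \<alpha> *\<^sub>R d) (A - \<beta> *\<^sub>R d) \<subseteq> S \<union> inside S"
    using chord_through_interior_point[OF assms(1-3)] by blast
  have A_on_chord: "A \<in> closed_segment (A + \<alpha> *\<^sub>R d) (A - \<beta> *\<^sub>R d)"
    using point_between_opposite_rays[of \<alpha> \<beta> A d] ab by simp
  have A_between: "A \<in> closed_segment G1 (A - \<beta> *\<^sub>R d)"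
    using point_between_opposite_rays[of 1 \<beta> A d] ab G1_eq by simp
  text \<open>If the wall were hit only beyond G1, the chord would contain the segment A G1.\<close>
  have "\<not> 1 \<le> \<alpha>"
  proof
    assume "1 \<le> \<alpha>"
    then have "G1 \<in> closed_segment A (A + \<alpha> *\<^sub>R d)"
      using ray_point_in_segment[of 1 \<alpha> A d] G1_eq by simp
    then have "closed_segment G1 A \<subseteq> closed_segment A (A + \<alpha> *\<^sub>R d)"
      by (intro closed_segment_subset) auto
    also have "\<dots> \<subseteq> closed_segment (A + \<alpha> *\<^sub>R d) (A - \<beta> *\<^sub>R d)"
      using A_on_chord by (intro closed_segment_subset) auto
    finally show False using unseen chord by blast
  qed
  then have "A + \<alpha> *\<^sub>R d \<in> closed_segment A G1"
    using ray_point_in_segment[of \<alpha> 1 A d] ab G1_eq by simp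
  then show thesis
    using that ends A_between A_on_chord chord by blast
qed

lemma interior_point_seen_by_two_guards:
  fixes S :: "'a::euclidean_space set"
  assumes "DIM('a) = 2" "closed S" "bounded S" "A \<in> inside S"
    and G1: "G1 \<in> F" and at_most_two: "finite F" "card F \<le> 2"
    and walls_seen: "\<And>X. X \<in> S \<Longrightarrow> \<exists>G\<in>F. closed_segment G X \<subseteq> S \<union> inside S"
  shows "\<exists>G\<in>F. closed_segment G A \<subseteq> S \<union> inside S"
proof (rule ccontr)
  assume unseen: "\<not> (\<exists>G\<in>F. closed_segment G A \<subseteq> S \<union> inside S)"
  then obtain A1 Q where A1: "A1 \<in> S" and Q: "Q \<in> S"
    and A1_before_G1: "A1 \<in> closed_segment A G1" and A_between: "A \<in> closed_segment G1 Q"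
    and A_on_chord: "A \<in> closed_segment A1 Q" and chord: "closed_segment A1 Q \<subseteq> S \<union> inside S"
    using chord_towards_guard[OF assms(2-4)] G1 by metis
  have "closed_segment A A1 \<subseteq> closed_segment A1 Q"
    using A_on_chord by (intro closed_segment_subset) auto
  then have half_chord: "closed_segment A A1 \<subseteq> S \<union> inside S"
    using chord by blast
  obtain G where G: "G \<in> F" "closed_segment G Q \<subseteq> S \<union> inside S"
    using walls_seen Q by blast
  obtain G' where G': "G' \<in> F" "closed_segment G' A1 \<subseteq> S \<union> inside S"
    using walls_seen A1 by blast
  have "G \<noteq> G1"
  proof
    assume "G = G1"
    then have "closed_segment G A \<subseteq> closed_segment G Q"
      using A_between by (intro closed_segment_subset) auto
    then show False using G unseen by blast
  qed
  have "G' \<noteq> G1"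
  proof
    assume "G' = G1"
    have "closed_segment A A1 \<union> closed_segment A1 G1 = closed_segment A G1"
      using A1_before_G1 by (rule Un_closed_segment)
    moreover have "closed_segment A1 G1 \<subseteq> S \<union> inside S"
      using G'(2) \<open>G' = G1\<close> closed_segment_commute[of A1 G1] by blast
    ultimately have "closed_segment A G1 \<subseteq> S \<union> inside S"
      using half_chord by blast
    then show False using G1 unseen closed_segment_commute[of A G1] by blast
  qed
  have "G' = G"
  proof (rule ccontr)
    assume "G' \<noteq> G"
    then have "card {G1, G, G'} = 3" using \<open>G \<noteq> G1\<close> \<open>G' \<noteq> G1\<close> by auto
    moreover have "card {G1, G, G'} \<le> card F"
      using G(1) G'(1) G1 at_most_two(1) by (intro card_mono) auto
    ultimately show False using at_most_two(2) by linarith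
  qed
  then have "closed_segment G A \<subseteq> S \<union> inside S"
    using segment_in_filled_triangle[OF assms(1,3) _ G(2) chord A_on_chord] G'(2) by blast
  then show False using G unseen by blast
qed

lemma walls_cover_imp_region_cover:
  fixes S F :: "complex set"
  assumes "closed S" "bounded S" "F \<noteq> {}" "finite F" "card F \<le> 2"
    and walls_covered: "config_covers (S \<union> inside S) F S"
  shows "config_covers (S \<union> inside S) F (S \<union> inside S)"
  unfolding config_covers_def
proof
  fix A assume A: "A \<in> S \<union> inside S"
  show "\<exists>G\<in>F. visually_covers (S \<union> inside S) G A"
  proof (cases "A \<in> S")
    case True
    then show ?thesis using walls_covered by (simp add: config_covers_def)
  next
    case False
    then have "A \<in> inside S" using A by blast
    moreover obtain G1 where "G1 \<in> F" using assms(3) by blast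
    moreover have "\<And>X. X \<in> S \<Longrightarrow> \<exists>G\<in>F. closed_segment G X \<subseteq> S \<union> inside S"
      using walls_covered by (auto simp: config_covers_def visually_covers_def)
    ultimately obtain G where "G \<in> F" "closed_segment G A \<subseteq> S \<union> inside S"
      using interior_point_seen_by_two_guards[OF DIM_complex assms(1,2) _ _ assms(4,5)] by blast
    then show ?thesis using A by (auto simp: visually_covers_def)
  qed
qed

theorem proposition3:
  fixes vs :: "complex list" and F :: "complex set"
  assumes "simple_polygon_vertices vs"
    and "finite F" and "F \<subseteq> gallery vs"
    and "card F = 1 \<or> card F = 2"
    and "config_covers (gallery vs) F (walls vs)"
  shows "config_covers (gallery vs) F (gallery vs)"
proof -
  have "path (polygonal_path vs)"
    using assms(1) by (simp add: simple_polygon_vertices_def simple_path_imp_path)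
  then have "compact (walls vs)"
    by (simp add: walls_def compact_path_image)
  moreover have "F \<noteq> {}" "card F \<le> 2" using assms(4) by auto
  ultimately show ?thesis
    using walls_cover_imp_region_cover[of "walls vs" F] assms(2,5)
    by (simp add: gallery_def compact_imp_closed compact_imp_bounded)
qed

end
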